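(* Assume (H), (H1), and that $L$ has the KL-property at some $\bar z$, with associated $\eta\in(0,\infty]$, neighborhood $U$ and function $\varphi$. Let $\rho>0$ be such that $B(\bar z,\rho)\subset U$, let $C$ be a Lipschitz constant of $\nabla Q$ on $B(\bar z,\sqrt{2R}\rho)$, and $M=2r_+(C\sqrt{2R}+1/r_-)$. Let $(z_k)$ be generated by PAM from $z_0$, write $l_k=L(z_k)$, $\bar l=L(\bar z)$, and assume $\bar l<l_k<\bar l+\eta$ for all $k\ge0$ and $$M\varphi(l_0-\bar l)+2\sqrt{2r_+}\sqrt{l_0-\bar l}+\|z_0-\bar z\|_2<\rho.$$ Then $(z_k)$ converges to a critical point of $L$, and for all $k\ge0$: (i) $z_k\in B(\bar z,\rho)$; (ii) $\sum_{i=k+1}^\infty\|z_{i+1}-z_i\|_2\le M\varphi(l_k-\bar l)+\sqrt{2r_+}\sqrt{l_k-\bar l}$.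
   Context: Setting: $L(u^1,\dots,u^R,v^1,\dots,v^R)=\sum_{r=1}^Rf_r(u^r)+Q(u^1,\dots,v^R)+\sum_{r=1}^Rg_r(v^r)$ on $(\mathbb{R}^{n_1})^R\times(\mathbb{R}^{n_2})^R$. (H): $f_r,g_r$ proper lower semicontinuous with values in $\mathbb{R}\cup\{\infty\}$; $Q$ real-valued $C^1$ with $\nabla Q$ Lipschitz on bounded sets. (H1): $\inf L>-\infty$, $L(\cdot,u_0^2,\dots,v_0^R)$ proper, all proximal parameters $\lambda_k^r,\mu_k^r\in(r_-,r_+)$ for some $0<r_-<r_+$. PAM: for $k\ge0$, $r=1,\dots,R$ in order, $u_{k+1}^r\in\arg\min_u L(u_{k+1}^1,\dots,u_{k+1}^{r-1},u,u_k^{r+1},\dots,u_k^R,v_{k+1}^1,\dots,v_{k+1}^{r-1},v_k^r,\dots,v_k^R)+\frac{1}{2\lambda_k^r}\|u-u_k^r\|_2^2$, $v_{k+1}^r\in\arg\min_v L(u_{k+1}^1,\dots,u_{k+1}^r,u_k^{r+1},\dots,u_k^R,v_{k+1}^1,\dots,v_{k+1}^{r-1},v,v_k^{r+1},\dots,v_k^R)+\frac{1}{2\mu_k^r}\|v-v_k^r\|_2^2$; $z_k=(u_k^1,\dots,v_k^R)$. $\partial$ is the limiting subdifferential; critical points are $z$ with $0\in\partial L(z)$. KL-property: a proper lsc $f:\mathbb{R}^n\to\mathbb{R}\cup\{\infty\}$ has the KL-property at $\bar x\in\mathrm{dom}\,\partial f$ if there exist $\eta\in(0,\infty]$, a neighborhood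 $U$ of $\bar x$, and a continuous concave $\varphi:[0,\eta)\to[0,\infty)$ with $\varphi(0)=0$, $\varphi\in C^1(0,\eta)$, $\varphi'>0$ on $(0,\eta)$, such that $\varphi'(f(x)-f(\bar x))\,\mathrm{dist}(0,\partial f(x))\ge1$ for all $x\in U$ with $f(\bar x)<f(x)<f(\bar x)+\eta$. *)

theory Defs
  imports "HOL-Analysis.Analysis" "HOL-Library.Extended_Real"
begin

definition proper_fun :: "('a \<Rightarrow> ereal) \<Rightarrow> bool" where
  "proper_fun f \<longleftrightarrow> (\<forall>x. f x \<noteq> -\<infinity>) \<and> (\<exists>x. f x \<noteq> \<infinity>)"

definition lsc_fun :: "('a::topological_space \<Rightarrow> ereal) \<Rightarrow> bool" where
  "lsc_fun f \<longleftrightarrow> (\<forall>x. f x \<le> Liminf (at x) f)"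

text \<open>Frechet (regular) subdifferential, liminf written out.\<close>
definition frechet_subdiff :: "('a::real_inner \<Rightarrow> ereal) \<Rightarrow> 'a \<Rightarrow> 'a set" where
  "frechet_subdiff f x = {w. \<bar>f x\<bar> \<noteq> \<infinity> \<and>
      (\<forall>e>0. \<exists>d>0. \<forall>y. norm (y - x) < d \<longrightarrow>
          f y \<ge> f x + ereal (inner w (y - x) - e * norm (y - x)))}"

definition limiting_subdiff :: "('a::real_inner \<Rightarrow> ereal) \<Rightarrow> 'a \<Rightarrow> 'a set" where
  "limiting_subdiff f x = {w. \<exists>xs ws. xs \<longlonglongrightarrow> x \<and> (\<lambda>k. f (xs k)) \<longlonglongrightarrow> f x \<and>
      (\<forall>k. ws k \<in> frechet_subdiff f (xs k)) \<and> ws \<longlonglongrightarrow> w}"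

text \<open>KL property at xbar with the given eta, U, phi.
  The distance dist(0, empty set) is +infinity, so the inequality is vacuous there.\<close>
definition KL_at :: "('a::euclidean_space \<Rightarrow> ereal) \<Rightarrow> 'a \<Rightarrow> ereal \<Rightarrow> 'a set \<Rightarrow> (real \<Rightarrow> real) \<Rightarrow> bool" where
  "KL_at f xbar \<eta> U \<phi> \<longleftrightarrow>
     limiting_subdiff f xbar \<noteq> {} \<and>
     \<eta> > 0 \<and> xbar \<in> interior U \<and>
     continuous_on {t. 0 \<le> t \<and> ereal t < \<eta>} \<phi> \<and>
     concave_on {t. 0 \<le> t \<and> ereal t < \<eta>} \<phi> \<and>
     \<phi> 0 = 0 \<and> (\<forall>t. 0 \<le> t \<and> ereal t < \<eta> \<longrightarrow> 0 \<le> \<phi> t) \<and>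
     (\<forall>t. 0 < t \<and> ereal t < \<eta> \<longrightarrow> \<phi> differentiable (at t)) \<and>
     continuous_on {t. 0 < t \<and> ereal t < \<eta>} (deriv \<phi>) \<and>
     (\<forall>t. 0 < t \<and> ereal t < \<eta> \<longrightarrow> deriv \<phi> t > 0) \<and>
     (\<forall>x\<in>U. f xbar < f x \<and> f x < f xbar + \<eta> \<longrightarrow>
        limiting_subdiff f x = {} \<or>
        deriv \<phi> (real_of_ereal (f x - f xbar)) * infdist 0 (limiting_subdiff f x) \<ge> 1)"

text \<open>Blocks are indexed by a finite linearly ordered type 'r (so R = CARD('r)),
  processed in increasing order. A point z = (u, v) with u $ r = u^r, v $ r = v^r.\<close>

type_synonym ('n1, 'n2, 'r) pt = "((real^'n1)^'r) \<times> ((real^'n2)^'r)"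

definition mix :: "('b, 'r::{finite,linorder}) vec \<Rightarrow> ('b, 'r) vec \<Rightarrow> 'r \<Rightarrow> 'b \<Rightarrow> ('b, 'r) vec" where
  "mix new old r x = (\<chi> s. if s < r then new $ s else if s = r then x else old $ s)"

definition Lfun :: "('r::finite \<Rightarrow> real^'n1::finite \<Rightarrow> ereal) \<Rightarrow> (('n1,'n2,'r) pt \<Rightarrow> real)
     \<Rightarrow> ('r \<Rightarrow> real^'n2 \<Rightarrow> ereal) \<Rightarrow> ('n1,'n2,'r) pt \<Rightarrow> ereal" where
  "Lfun f Q g z = (\<Sum>r\<in>UNIV. f r (fst z $ r)) + ereal (Q z) + (\<Sum>r\<in>UNIV. g r (snd z $ r))"

definition PAM_seq :: "(('n1::finite,'n2::finite,'r::{finite,linorder}) pt \<Rightarrow> ereal) \<Rightarrow> (nat \<Rightarrow> 'r \<Rightarrow> real)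
     \<Rightarrow> (nat \<Rightarrow> 'r \<Rightarrow> real) \<Rightarrow> (nat \<Rightarrow> ('n1,'n2,'r) pt) \<Rightarrow> bool" where
  "PAM_seq L lam mu z \<longleftrightarrow> (\<forall>k r.
     let uk = fst (z k); vk = snd (z k); uk1 = fst (z (Suc k)); vk1 = snd (z (Suc k));
         Uobj = (\<lambda>x. L (mix uk1 uk r x, mix vk1 vk r (vk $ r))
                    + ereal (norm (x - uk $ r) ^ 2 / (2 * lam k r)));
         Vobj = (\<lambda>y. L (mix uk1 uk r (uk1 $ r), mix vk1 vk r y)
                    + ereal (norm (y - vk $ r) ^ 2 / (2 * mu k r)))
     in (\<forall>x. Uobj (uk1 $ r) \<le> Uobj x) \<and> (\<forall>y. Vobj (vk1 $ r) \<le> Vobj y))"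

end

theory Submission
  imports Defs
begin

text \<open>
  Write \<open>d k = \<parallel>z (k+1) - z k\<parallel>\<close> and \<open>l k = L (z k)\<close>. Each PAM iteration decreases \<open>L\<close> by at least
  \<open>d k\<^sup>2 / (2 r\<^sub>+)\<close>, and the optimality conditions of its \<open>2R\<close> block subproblems assemble into
  a subgradient \<open>W k \<in> \<partial>L(z (k+1))\<close> of norm at most \<open>(C \<surd>(2R) + 1/r\<^sub>-) d k\<close>: every
  intermediate point of the sweep takes each block from \<open>z k\<close> or \<open>z (k+1)\<close>, so it lies in
  the ball of radius \<open>\<surd>(2R) \<rho>\<close> where \<open>\<nabla>Q\<close> is \<open>C\<close>-Lipschitz. While the iterates stay in
  \<open>ball zbar \<rho>\<close>, the KL inequality and the concavity of \<open>\<phi>\<close> turn the two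
  estimates into \<open>2 d (k+1) \<le> d k + M (\<phi>(l (k+1) - lbar) - \<phi>(l (k+2) - lbar))\<close>. This telescopes,
  bounds the length of every tail of the trajectory, and together with the smallness of the
  initial data keeps all iterates in the ball by induction. Finite length makes \<open>z\<close> converge,
  \<open>W k \<rightarrow> 0\<close>, and block minimality plus lower semicontinuity give \<open>L(z (k+1)) \<rightarrow> L(lim z)\<close>,
  so the limit is critical.
\<close>

lemma norm_vec_power2:
  "(norm (x :: 'a::real_normed_vector ^ 'b::finite))\<^sup>2 = (\<Sum>i\<in>UNIV. (norm (x $ i))\<^sup>2)"
  unfolding norm_vec_def L2_set_def by (simp add: sum_nonneg)

lemma norm_pt_power2:
  "(norm (x :: ('n1::finite, 'n2::finite, 'r::finite) pt))\<^sup>2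
     = (\<Sum>r\<in>UNIV. (norm (fst x $ r))\<^sup>2) + (\<Sum>r\<in>UNIV. (norm (snd x $ r))\<^sup>2)"
  by (cases x) (simp add: norm_Pair norm_vec_power2 sum_nonneg)

lemma norm_fst_nth_le: "norm (fst x $ r) \<le> norm (x :: ('a::real_normed_vector ^ 'r::finite) \<times> 'b::real_normed_vector)"
  using Finite_Cartesian_Product.norm_nth_le[of "fst x" r] norm_fst_le[of "fst x" "snd x"] by simp

lemma norm_snd_nth_le: "norm (snd x $ r) \<le> norm (x :: 'b::real_normed_vector \<times> ('a::real_normed_vector ^ 'r::finite))"
  using Finite_Cartesian_Product.norm_nth_le[of "snd x" r] norm_snd_le[of "snd x" "fst x"] by simp

lemma norm_pt_le_if_blocks_le:
  fixes X Y :: "('n1::finite, 'n2::finite, 'r::finite) pt"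
  assumes "\<And>r. norm (fst X $ r) \<le> c * norm (fst Y $ r)" and "\<And>r. norm (snd X $ r) \<le> c * norm (snd Y $ r)"
    and "0 \<le> c"
  shows "norm X \<le> c * norm Y"
proof -
  have "(norm X)\<^sup>2 \<le> (\<Sum>r\<in>UNIV. (c * norm (fst Y $ r))\<^sup>2) + (\<Sum>r\<in>UNIV. (c * norm (snd Y $ r))\<^sup>2)"
    unfolding norm_pt_power2 using assms by (intro add_mono sum_mono power_mono) auto
  also have "\<dots> = c\<^sup>2 * (norm Y)\<^sup>2"
    unfolding norm_pt_power2[of Y] by (simp add: power_mult_distrib sum_distrib_left distrib_left)
  also have "\<dots> = (c * norm Y)\<^sup>2" by (rule power_mult_distrib[symmetric])
  finally show ?thesis by (rule power2_le_imp_le) (use assms(3) in simp)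
qed

lemma norm_pt_le_if_blocks_bounded:
  fixes X :: "('n1::finite, 'n2::finite, 'r::finite) pt"
  assumes "\<And>r. norm (fst X $ r) \<le> b" and "\<And>r. norm (snd X $ r) \<le> b"
  shows "norm X \<le> sqrt (2 * real CARD('r)) * b"
proof -
  have b: "0 \<le> b" using assms(1) norm_ge_zero order_trans by blast
  have "(norm X)\<^sup>2 \<le> (\<Sum>r\<in>(UNIV::'r set). b\<^sup>2) + (\<Sum>r\<in>(UNIV::'r set). b\<^sup>2)"
    unfolding norm_pt_power2 using assms by (intro add_mono sum_mono power_mono) auto
  also have "\<dots> = (sqrt (2 * real CARD('r)) * b)\<^sup>2" by (simp add: power_mult_distrib)
  finally show ?thesis by (rule power2_le_imp_le) (use b in simp)
qed

definition blocks_from :: "('n1::finite,'n2::finite,'r::finite) pt \<Rightarrow> ('n1,'n2,'r) pt \<Rightarrow> ('n1,'n2,'r) pt \<Rightarrow> bool" where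
  "blocks_from P A B \<longleftrightarrow> (\<forall>r. fst P $ r \<in> {fst A $ r, fst B $ r} \<and> snd P $ r \<in> {snd A $ r, snd B $ r})"

lemma blocks_from_norm_power2_le:
  assumes "blocks_from P A B"
  shows "(norm (P - c))\<^sup>2 \<le> (norm (A - c))\<^sup>2 + (norm (B - c))\<^sup>2"
proof -
  have 1: "(norm (fst (P - c) $ r))\<^sup>2 \<le> (norm (fst (A - c) $ r))\<^sup>2 + (norm (fst (B - c) $ r))\<^sup>2" for r
    using assms unfolding blocks_from_def by (cases "fst P $ r = fst A $ r") auto
  have 2: "(norm (snd (P - c) $ r))\<^sup>2 \<le> (norm (snd (A - c) $ r))\<^sup>2 + (norm (snd (B - c) $ r))\<^sup>2" for r
    using assms unfolding blocks_from_def by (cases "snd P $ r = snd A $ r") auto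
  have "(norm (P - c))\<^sup>2 \<le> (\<Sum>r\<in>UNIV. (norm (fst (A - c) $ r))\<^sup>2 + (norm (fst (B - c) $ r))\<^sup>2)
      + (\<Sum>r\<in>UNIV. (norm (snd (A - c) $ r))\<^sup>2 + (norm (snd (B - c) $ r))\<^sup>2)"
    unfolding norm_pt_power2 by (intro add_mono sum_mono 1 2)
  also have "\<dots> = (norm (A - c))\<^sup>2 + (norm (B - c))\<^sup>2"
    unfolding norm_pt_power2 sum.distrib by simp
  finally show ?thesis .
qed

lemma blocks_from_dist_le: "blocks_from P A B \<Longrightarrow> norm (P - A) \<le> norm (B - A)"
  using blocks_from_norm_power2_le[of P A B A] by (simp add: power_mono_iff)

section \<open>Partial block updates\<close>

lemma mix_nth: "mix new old r x $ s = (if s < r then new $ s else if s = r then x else old $ s)"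
  unfolding mix_def by simp

lemma mix_same: "mix v v r (v $ r) = v"
  by (simp add: vec_eq_iff mix_nth)

lemma mix_Max: "mix new old (Max (UNIV :: 'r::{finite,linorder} set)) (new $ Max UNIV) = new"
proof -
  have "\<not> s < Max UNIV \<Longrightarrow> s = Max UNIV" for s :: 'r
  proof -
    have "s \<le> Max UNIV" by (simp add: Max_ge)
    then show "\<not> s < Max UNIV \<Longrightarrow> s = Max UNIV" by (simp add: not_less order.antisym)
  qed
  then show ?thesis by (auto simp: vec_eq_iff mix_nth)
qed

lemma mix_predecessor:
  assumes "p < r" and "\<And>s. s < r \<longleftrightarrow> s \<le> p"
  shows "mix new old r (old $ r) = mix new old p (new $ p)"
proof -
  have "(if s < r then new $ s else if s = r then old $ r else old $ s) =
        (if s < p then new $ s else if s = p then new $ p else old $ s)" for s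
    using assms(2)[of s] assms(1) by (cases "s < p"; cases "s = p"; cases "s < r") auto
  then show ?thesis by (simp add: vec_eq_iff mix_nth)
qed

lemma tendsto_mix [tendsto_intros]:
  assumes "(new \<longlongrightarrow> a) F" and "(old \<longlongrightarrow> b) F" and "(x \<longlongrightarrow> c) F"
  shows "((\<lambda>k. mix (new k) (old k) r (x k)) \<longlongrightarrow> mix a b r c) F"
  unfolding mix_def using assms by (intro tendsto_vec_lambda) (auto intro: tendsto_vec_nth)

lemma norm_axis: "norm (axis i x) = norm x"
proof -
  have "(norm (axis i x))\<^sup>2 = (norm x)\<^sup>2"
    unfolding norm_vec_power2 axis_def by (simp add: if_distrib[of "\<lambda>x. (norm x)\<^sup>2"] cong: if_cong)
  then show ?thesis by (simp add: power2_eq_iff_nonneg)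
qed

lemma bounded_linear_axis: "bounded_linear (axis i)"
  by (rule bounded_linear_intro[where K = 1]) (auto simp: axis_def vec_eq_iff norm_axis[unfolded axis_def])

lemma has_derivative_mix: "(mix new old r has_derivative axis r) (at x)"
proof -
  have eq: "mix new old r = (\<lambda>x. mix new old r 0 + axis r x)"
    by (auto simp: vec_eq_iff mix_nth axis_def)
  have "((\<lambda>x. mix new old r 0 + axis r x) has_derivative (\<lambda>h. 0 + axis r h)) (at x)"
    by (intro has_derivative_add has_derivative_const
        bounded_linear.has_derivative[OF bounded_linear_axis] has_derivative_ident)
  then show ?thesis by (subst eq) simp
qed

lemma has_derivative_norm_power2_div:
  fixes c :: "'a::real_inner"
  assumes "l \<noteq> 0"
  shows "((\<lambda>x. (norm (x - c))\<^sup>2 / (2 * l)) has_derivative (\<lambda>h. inner ((1 / l) *\<^sub>R (x0 - c)) h)) (at x0)"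
proof -
  have d: "((\<lambda>x. x - c) has_derivative (\<lambda>h. h)) (at x0)"
    using has_derivative_diff[OF has_derivative_ident has_derivative_const] by simp
  have D: "((\<lambda>x. inner (x - c) (x - c) / (2 * l)) has_derivative
      (\<lambda>h. (inner (x0 - c) h + inner h (x0 - c)) / (2 * l))) (at x0)"
    using bounded_linear.has_derivative[OF bounded_linear_divide[of "2 * l"] has_derivative_inner[OF d d]] .
  have gen: "(inner a h + inner h a) / (2 * l) = inner ((1 / l) *\<^sub>R a) h" for a h :: 'a
    using assms by (simp add: inner_commute[of h a])
  have E: "(\<lambda>h. (inner (x0 - c) h + inner h (x0 - c)) / (2 * l)) = (\<lambda>h. inner ((1 / l) *\<^sub>R (x0 - c)) h)"
    by (simp only: gen)
  have F: "(\<lambda>x. (norm (x - c))\<^sup>2 / (2 * l)) = (\<lambda>x. inner (x - c) (x - c) / (2 * l))"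
    by (simp add: power2_norm_eq_inner)
  show ?thesis using D unfolding E F .
qed

section \<open>Frechet subdifferential calculus\<close>

lemma frechet_subdiff_iff:
  "w \<in> frechet_subdiff F x \<longleftrightarrow> \<bar>F x\<bar> \<noteq> \<infinity> \<and>
     (\<forall>e>0. eventually (\<lambda>y. F x + ereal (inner w (y - x) - e * norm (y - x)) \<le> F y) (nhds x))"
  unfolding frechet_subdiff_def eventually_nhds_metric dist_norm by auto

lemma frechet_subdiff_imp_limiting_subdiff: "w \<in> frechet_subdiff F x \<Longrightarrow> w \<in> limiting_subdiff F x"
  unfolding limiting_subdiff_def by (intro CollectI exI[of _ "\<lambda>_. x"] exI[of _ "\<lambda>_. w"]) simp

lemma frechet_subdiff_add:
  assumes v: "v \<in> frechet_subdiff F x" and w: "w \<in> frechet_subdiff G x"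
  shows "v + w \<in> frechet_subdiff (\<lambda>y. F y + G y) x"
proof -
  obtain a b where a: "F x = ereal a" and b: "G x = ereal b"
    using v w unfolding frechet_subdiff_iff by (cases "F x"; cases "G x") auto
  have "eventually (\<lambda>y. F x + G x + ereal (inner (v + w) (y - x) - e * norm (y - x)) \<le> F y + G y) (nhds x)"
    if e: "e > 0" for e
  proof -
    have "e / 2 > 0" using e by simp
    then have "eventually (\<lambda>y. F x + ereal (inner v (y - x) - e / 2 * norm (y - x)) \<le> F y) (nhds x)"
      and "eventually (\<lambda>y. G x + ereal (inner w (y - x) - e / 2 * norm (y - x)) \<le> G y) (nhds x)"
      using v w unfolding frechet_subdiff_iff by blast+
    then show ?thesis
    proof eventually_elim
      case (elim y)
      have "F x + G x + ereal (inner (v + w) (y - x) - e * norm (y - x))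
          = (F x + ereal (inner v (y - x) - e / 2 * norm (y - x)))
            + (G x + ereal (inner w (y - x) - e / 2 * norm (y - x)))"
        unfolding a b by (simp add: inner_add_left algebra_simps)
      with elim show ?case by (simp add: add_mono)
    qed
  qed
  then show ?thesis unfolding frechet_subdiff_iff a b by simp
qed

lemma frechet_subdiff_sum:
  assumes "finite I" and "\<And>i. i \<in> I \<Longrightarrow> w i \<in> frechet_subdiff (F i) x"
  shows "(\<Sum>i\<in>I. w i) \<in> frechet_subdiff (\<lambda>y. \<Sum>i\<in>I. F i y) x"
  using assms
proof (induction I rule: finite_induct)
  case empty
  show ?case unfolding frechet_subdiff_iff by (simp add: eventually_True)
next
  case (insert i I)
  then have "w i + (\<Sum>i\<in>I. w i) \<in> frechet_subdiff (\<lambda>y. F i y + (\<Sum>i\<in>I. F i y)) x"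
    by (intro frechet_subdiff_add) auto
  with insert.hyps show ?case by simp
qed

lemma frechet_subdiff_comp_contraction:
  assumes w: "w \<in> frechet_subdiff F (T x)"
    and T: "bounded_linear T" "\<And>h. norm (T h) \<le> norm h"
    and v: "\<And>h. inner v h = inner w (T h)"
  shows "v \<in> frechet_subdiff (\<lambda>y. F (T y)) x"
proof -
  have lim: "filterlim T (nhds (T x)) (nhds x)"
    using bounded_linear.tendsto[OF T(1) filterlim_ident] .
  have "eventually (\<lambda>y. F (T x) + ereal (inner v (y - x) - e * norm (y - x)) \<le> F (T y)) (nhds x)"
    if e: "e > 0" for e
  proof -
    have "eventually (\<lambda>y. F (T x) + ereal (inner w (T y - T x) - e * norm (T y - T x)) \<le> F (T y)) (nhds x)"
      using eventually_compose_filterlim[OF _ lim, of "\<lambda>u. F (T x) + ereal (inner w (u - T x) - e * norm (u - T x)) \<le> F u"]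
        w e unfolding frechet_subdiff_iff by blast
    then show ?thesis
    proof eventually_elim
      case (elim y)
      have "inner v (y - x) - e * norm (y - x) \<le> inner w (T y - T x) - e * norm (T y - T x)"
        using T(2)[of "y - x"] e v[of "y - x"] by (simp add: linear_diff[OF bounded_linear.linear[OF T(1)]])
      then show ?case using elim by (meson add_left_mono ereal_less_eq(3) order_trans)
    qed
  qed
  with w show ?thesis unfolding frechet_subdiff_iff by auto
qed

lemma frechet_subdiff_vec_nth:
  "w \<in> frechet_subdiff F (x $ i) \<Longrightarrow> axis i w \<in> frechet_subdiff (\<lambda>y. F (y $ i)) x"
  by (rule frechet_subdiff_comp_contraction)
    (auto simp: inner_axis' Finite_Cartesian_Product.norm_nth_le)

lemma frechet_subdiff_separable:
  assumes "\<And>i. w i \<in> frechet_subdiff (F i) (x $ i)"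
  shows "(\<chi> i. w i) \<in> frechet_subdiff (\<lambda>y. \<Sum>i\<in>UNIV. F i (y $ i)) x"
proof -
  have "(\<Sum>i\<in>UNIV. axis i (w i)) \<in> frechet_subdiff (\<lambda>y. \<Sum>i\<in>UNIV. F i (y $ i)) x"
    using assms by (intro frechet_subdiff_sum frechet_subdiff_vec_nth) simp_all
  moreover have "(\<Sum>i\<in>UNIV. axis i (w i)) = (\<chi> i. w i)"
    by (simp add: vec_eq_iff axis_def)
  ultimately show ?thesis by simp
qed

lemma frechet_subdiff_fst:
  "v \<in> frechet_subdiff F (fst x) \<Longrightarrow> (v, 0) \<in> frechet_subdiff (\<lambda>y. F (fst y)) x"
  by (rule frechet_subdiff_comp_contraction) (auto simp: bounded_linear_fst norm_fst_le inner_Pair_0)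

lemma frechet_subdiff_snd:
  "v \<in> frechet_subdiff F (snd x) \<Longrightarrow> (0, v) \<in> frechet_subdiff (\<lambda>y. F (snd y)) x"
  by (rule frechet_subdiff_comp_contraction) (auto simp: bounded_linear_snd norm_snd_le inner_Pair_0)

lemma has_derivative_imp_frechet_subdiff:
  assumes "(Q has_derivative (\<lambda>h. inner G h)) (at x)"
  shows "G \<in> frechet_subdiff (\<lambda>y. ereal (Q y)) x"
proof -
  have "eventually (\<lambda>y. Q x + inner G (y - x) - e * norm (y - x) \<le> Q y) (nhds x)" if "e > 0" for e
  proof -
    obtain d where "d > 0" and d: "\<And>y. norm (y - x) < d \<Longrightarrow> norm (Q y - Q x - inner G (y - x)) \<le> e * norm (y - x)"
      using assms \<open>e > 0\<close> unfolding has_derivative_at_alt by blast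
    then show ?thesis
      unfolding eventually_nhds_metric dist_norm by (force simp: abs_le_iff)
  qed
  then show ?thesis unfolding frechet_subdiff_iff by (simp add: algebra_simps)
qed

lemma frechet_subdiff_Lfun:
  assumes "\<And>r. a r \<in> frechet_subdiff (f r) (fst x $ r)"
    and "\<And>r. b r \<in> frechet_subdiff (g r) (snd x $ r)"
    and "(Q has_derivative (\<lambda>h. inner G h)) (at x)"
  shows "(\<chi> r. a r, \<chi> r. b r) + G \<in> frechet_subdiff (Lfun f Q g) x"
proof -
  have "((\<chi> r. a r, 0) + G) + (0, \<chi> r. b r) \<in> frechet_subdiff
      (\<lambda>y. ((\<Sum>r\<in>UNIV. f r (fst y $ r)) + ereal (Q y)) + (\<Sum>r\<in>UNIV. g r (snd y $ r))) x"
    using assms by (intro frechet_subdiff_add frechet_subdiff_fst frechet_subdiff_snd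
        frechet_subdiff_separable has_derivative_imp_frechet_subdiff)
  moreover have "((\<chi> r. a r, 0) + G) + (0, \<chi> r. b r) = (\<chi> r. a r, \<chi> r. b r) + G"
    by (simp add: algebra_simps)
  ultimately show ?thesis unfolding Lfun_def[abs_def] by simp
qed

lemma frechet_subdiff_at_min_plus_smooth:
  assumes fin: "\<bar>F x\<bar> \<noteq> \<infinity>" and min: "\<And>y. F x \<le> F y + ereal (h y - h x)"
    and dh: "(h has_derivative (\<lambda>y. inner G y)) (at x)"
  shows "- G \<in> frechet_subdiff F x"
proof -
  have "((\<lambda>y. - h y) has_derivative (\<lambda>y. inner (- G) y)) (at x)"
    using has_derivative_minus[OF dh] by simp
  then have G: "- G \<in> frechet_subdiff (\<lambda>y. ereal (- h y)) x"
    by (rule has_derivative_imp_frechet_subdiff)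
  have below: "F x + ereal (h x - h y) \<le> F y" for y
    using min[of y] fin by (cases "F x"; cases "F y") auto
  have "eventually (\<lambda>y. F x + ereal (inner (- G) (y - x) - e * norm (y - x)) \<le> F y) (nhds x)"
    if "e > 0" for e
  proof -
    have "eventually (\<lambda>y. ereal (- h x) + ereal (inner (- G) (y - x) - e * norm (y - x)) \<le> ereal (- h y)) (nhds x)"
      using G that unfolding frechet_subdiff_iff by blast
    then show ?thesis
    proof eventually_elim
      case (elim y)
      then have "F x + ereal (inner (- G) (y - x) - e * norm (y - x)) \<le> F x + ereal (h x - h y)"
        by (intro add_left_mono) simp
      then show ?case using below[of y] by (rule order_trans)
    qed
  qed
  with fin show ?thesis unfolding frechet_subdiff_iff by blast
qed

lemma prox_block_optimality:
  fixes F :: "'a::real_normed_vector \<Rightarrow> ereal" and P :: "'a \<Rightarrow> 'b"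
  assumes split: "\<And>x. L (P x) = F x + R + ereal (Q (P x))"
    and min: "\<And>x. L (P xmin) + ereal ((norm (xmin - xprev))\<^sup>2 / (2 * c))
                  \<le> L (P x) + ereal ((norm (x - xprev))\<^sup>2 / (2 * c))"
    and fin: "\<bar>L (P xmin)\<bar> \<noteq> \<infinity>" and R: "R \<noteq> -\<infinity>" and F: "\<And>x. F x \<noteq> -\<infinity>"
  defines "h \<equiv> \<lambda>x. Q (P x) + (norm (x - xprev))\<^sup>2 / (2 * c)"
  shows "\<bar>F xmin\<bar> \<noteq> \<infinity>" and "F xmin \<le> F x + ereal (h x - h xmin)"
proof -
  have "\<bar>F xmin + R + ereal (Q (P xmin))\<bar> \<noteq> \<infinity>" using fin split by simp
  then obtain a r where a: "F xmin = ereal a" and r: "R = ereal r"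
    using F[of xmin] R by (cases "F xmin"; cases R) auto
  then show "\<bar>F xmin\<bar> \<noteq> \<infinity>" by simp
  have "ereal (a + r + h xmin) \<le> F x + ereal (r + h x)"
    using min[of x] unfolding split a r h_def by (cases "F x") (simp_all add: algebra_simps)
  then show "F xmin \<le> F x + ereal (h x - h xmin)"
    unfolding a by (cases "F x") (simp_all add: algebra_simps)
qed

lemma lsc_fun_eventually_greater:
  fixes F :: "'a::metric_space \<Rightarrow> ereal"
  assumes "lsc_fun F" and "xs \<longlonglongrightarrow> x" and "c < F x"
  shows "eventually (\<lambda>k. c < F (xs k)) sequentially"
proof -
  have "eventually (\<lambda>u. c < F u) (at x)"
    using assms(1,3) unfolding lsc_fun_def le_Liminf_iff by (meson order_less_le_trans)
  then have "eventually (\<lambda>u. c < F u) (nhds x)"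
    unfolding eventually_at_filter by eventually_elim (use assms(3) in auto)
  from eventually_compose_filterlim[OF this assms(2)] show ?thesis .
qed

lemma lsc_fun_tendsto_if_le_vanishing:
  fixes F :: "'a::metric_space \<Rightarrow> ereal"
  assumes lsc: "lsc_fun F" and xs: "xs \<longlonglongrightarrow> x" and fin: "F x \<noteq> -\<infinity>"
    and le: "\<And>k. F (xs k) \<le> F x + ereal (e k)" and e: "e \<longlonglongrightarrow> 0"
  shows "(\<lambda>k. F (xs k)) \<longlonglongrightarrow> F x"
  unfolding order_tendsto_iff
proof (intro conjI allI impI)
  fix c assume "c < F x"
  then show "eventually (\<lambda>k. c < F (xs k)) sequentially"
    by (rule lsc_fun_eventually_greater[OF lsc xs])
next
  fix c assume c: "F x < c"
  obtain a where a: "F x = ereal a" using fin c by (cases "F x") auto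
  have "eventually (\<lambda>k. F x + ereal (e k) < c) sequentially"
  proof (cases c)
    case (real b)
    with c a have "0 < b - a" by simp
    from order_tendstoD(2)[OF e this] show ?thesis by eventually_elim (simp add: a real)
  qed (use c a in auto)
  then show "eventually (\<lambda>k. F (xs k) < c) sequentially"
    by eventually_elim (rule le_less_trans[OF le])
qed

lemma ereal_le_if_add_nonneg_le: "0 \<le> c \<Longrightarrow> a + ereal c \<le> b \<Longrightarrow> a \<le> b"
  using ereal_le_add_self[of "ereal c" a] by simp

lemma sum_ereal_not_MInfty: "(\<And>i. i \<in> I \<Longrightarrow> F i \<noteq> -\<infinity>) \<Longrightarrow> (\<Sum>i\<in>I. F i :: ereal) \<noteq> -\<infinity>"
  by (induction I rule: infinite_finite_induct) auto

lemma tendsto_sum_ereal_not_MInfty: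
  fixes F :: "'i \<Rightarrow> nat \<Rightarrow> ereal"
  assumes "\<And>i. i \<in> I \<Longrightarrow> F i \<longlonglongrightarrow> a i" and "\<And>i. a i \<noteq> -\<infinity>"
  shows "(\<lambda>k. \<Sum>i\<in>I. F i k) \<longlonglongrightarrow> (\<Sum>i\<in>I. a i)"
  using assms(1)
proof (induction I rule: infinite_finite_induct)
  case (insert i I)
  have "(\<Sum>i\<in>I. a i) \<noteq> -\<infinity>" by (rule sum_ereal_not_MInfty) (rule assms(2))
  then have "(\<lambda>k. F i k + (\<Sum>i\<in>I. F i k)) \<longlonglongrightarrow> a i + (\<Sum>i\<in>I. a i)"
    using insert by (intro tendsto_add_ereal_nonneg assms(2)) auto
  with insert.hyps show ?case by simp
qed simp_all

lemma tendsto_Lfun: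
  fixes x :: "nat \<Rightarrow> ('n1::finite, 'n2::finite, 'r::finite) pt"
  assumes f: "\<And>r. (\<lambda>k. f r (fst (x k) $ r)) \<longlonglongrightarrow> f r (fst y $ r)" "\<And>r u. f r u \<noteq> -\<infinity>"
    and g: "\<And>r. (\<lambda>k. g r (snd (x k) $ r)) \<longlonglongrightarrow> g r (snd y $ r)" "\<And>r v. g r v \<noteq> -\<infinity>"
    and Q: "(\<lambda>k. Q (x k)) \<longlonglongrightarrow> Q y"
  shows "(\<lambda>k. Lfun f Q g (x k)) \<longlonglongrightarrow> Lfun f Q g y"
proof -
  have F: "(\<lambda>k. \<Sum>r\<in>UNIV. f r (fst (x k) $ r)) \<longlonglongrightarrow> (\<Sum>r\<in>UNIV. f r (fst y $ r))"
    and G: "(\<lambda>k. \<Sum>r\<in>UNIV. g r (snd (x k) $ r)) \<longlonglongrightarrow> (\<Sum>r\<in>UNIV. g r (snd y $ r))"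
    using f g by (auto intro: tendsto_sum_ereal_not_MInfty)
  have nF: "(\<Sum>r\<in>UNIV. f r (fst y $ r)) \<noteq> -\<infinity>" and nG: "(\<Sum>r\<in>UNIV. g r (snd y $ r)) \<noteq> -\<infinity>"
    using f(2) g(2) by (simp_all add: sum_ereal_not_MInfty)
  have "(\<lambda>k. (\<Sum>r\<in>UNIV. f r (fst (x k) $ r)) + ereal (Q (x k))) \<longlonglongrightarrow> (\<Sum>r\<in>UNIV. f r (fst y $ r)) + ereal (Q y)"
    using nF F Q by (intro tendsto_add_ereal_nonneg tendsto_ereal) simp_all
  from tendsto_add_ereal_nonneg[OF _ nG this G] nF show ?thesis unfolding Lfun_def by simp
qed

lemma tendsto_norm_power2_div_zero:
  fixes a :: "nat \<Rightarrow> 'a::real_normed_vector"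
  assumes "a \<longlonglongrightarrow> 0" and "\<And>k. c \<le> l k" and "0 < c"
  shows "(\<lambda>k. (norm (a k))\<^sup>2 / (2 * l k)) \<longlonglongrightarrow> 0"
proof (rule Lim_null_comparison)
  have "(norm (a k))\<^sup>2 / (2 * l k) \<le> (norm (a k))\<^sup>2 / (2 * c)" for k
    using assms(2)[of k] assms(3) by (intro divide_left_mono) auto
  then show "eventually (\<lambda>k. norm ((norm (a k))\<^sup>2 / (2 * l k)) \<le> (norm (a k))\<^sup>2 / (2 * c)) sequentially"
    using assms(2,3) by (intro always_eventually allI) (simp add: order.trans[OF _ assms(2)])
  have "(\<lambda>k. (norm (a k))\<^sup>2) \<longlonglongrightarrow> 0"
    using tendsto_power[OF tendsto_norm_zero[OF assms(1)], of 2] by simp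
  then show "(\<lambda>k. (norm (a k))\<^sup>2 / (2 * c)) \<longlonglongrightarrow> 0" by (rule tendsto_divide_zero)
qed

lemma concave_on_below_tangent:
  fixes \<phi> :: "real \<Rightarrow> real" and \<eta> :: ereal
  assumes conc: "concave_on {t. 0 \<le> t \<and> ereal t < \<eta>} \<phi>" and diff: "\<phi> differentiable (at s)"
    and s: "0 < s" "ereal s < \<eta>" and t: "0 < t" "ereal t < \<eta>"
  shows "deriv \<phi> s * (s - t) \<le> \<phi> s - \<phi> t"
proof -
  define m where "m = max s t"
  have "ereal m < \<eta>" using s t by (simp add: m_def max_def)
  from ereal_dense2[OF this] obtain b where b: "m < b" "ereal b < \<eta>"
    by auto
  have sub: "{0<..<b} \<subseteq> {t. 0 \<le> t \<and> ereal t < \<eta>}"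
  proof
    fix x assume "x \<in> {0<..<b}"
    then have "0 < x" and "ereal x < ereal b" by simp_all
    moreover from this(2) b(2) have "ereal x < \<eta>" by (rule less_trans)
    ultimately show "x \<in> {t. 0 \<le> t \<and> ereal t < \<eta>}" by simp
  qed
  have convex: "convex_on {0<..<b} (\<lambda>x. - \<phi> x)"
    using convex_on_subset[OF conc[unfolded concave_on_def] sub convex_real_interval(8)] .
  have deriv: "((\<lambda>x. - \<phi> x) has_field_derivative - deriv \<phi> s) (at s within {0<..<b})"
    using has_field_derivative_at_within[OF DERIV_minus[OF DERIV_deriv_iff_real_differentiable[THEN iffD2, OF diff]]] .
  have s_int: "s \<in> interior {0<..<b}" and t_in: "t \<in> {0<..<b}"
    using s t b by (simp_all add: interior_open m_def)
  have "- \<phi> t - - \<phi> s \<ge> - deriv \<phi> s * (t - s)"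
    by (rule convex_on_imp_above_tangent[OF convex _ s_int t_in deriv]) simp
  then show ?thesis by (simp add: algebra_simps)
qed

lemma double_le_add_if_power2_le_mult:
  fixes x a b :: real
  assumes "x\<^sup>2 \<le> a * b" and "0 \<le> a" and "0 \<le> b" and "0 \<le> x"
  shows "2 * x \<le> a + b"
proof -
  have "x \<le> sqrt (a * b)" using assms real_le_rsqrt by blast
  with arith_geo_mean_sqrt[OF assms(2,3)] show ?thesis by simp
qed

section \<open>Descent and subgradients along a PAM sequence\<close>

locale pam =
  fixes f :: "'r::{finite,linorder} \<Rightarrow> real^'n1::finite \<Rightarrow> ereal"
    and g :: "'r \<Rightarrow> real^'n2::finite \<Rightarrow> ereal"
    and Q :: "('n1,'n2,'r) pt \<Rightarrow> real"
    and gradQ :: "('n1,'n2,'r) pt \<Rightarrow> ('n1,'n2,'r) pt"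
    and lam mu :: "nat \<Rightarrow> 'r \<Rightarrow> real"
    and rminus rplus :: real
    and z :: "nat \<Rightarrow> ('n1,'n2,'r) pt"
    and L :: "('n1,'n2,'r) pt \<Rightarrow> ereal"
  assumes L_def: "L = Lfun f Q g"
    and f_proper: "\<And>r. proper_fun (f r)" and f_lsc: "\<And>r. lsc_fun (f r)"
    and g_proper: "\<And>r. proper_fun (g r)" and g_lsc: "\<And>r. lsc_fun (g r)"
    and Q_grad: "\<And>x. (Q has_derivative (\<lambda>h. inner (gradQ x) h)) (at x)"
    and L_bdd_below: "\<exists>m::real. \<forall>x. ereal m \<le> L x"
    and rminus_pos: "0 < rminus"
    and lam_bnd: "\<And>k r. rminus < lam k r \<and> lam k r < rplus"
    and mu_bnd: "\<And>k r. rminus < mu k r \<and> mu k r < rplus"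
    and PAM: "PAM_seq L lam mu z"
    and L_z_finite: "\<And>k. \<bar>L (z k)\<bar> \<noteq> \<infinity>"
begin

lemma rplus_pos: "0 < rplus"
  using lam_bnd[of 0 undefined] rminus_pos by linarith

text \<open>Inside sweep \<open>k\<close>, the \<open>u\<close>-step of block \<open>r\<close> varies \<open>u\<^sup>r\<close> at the point whose blocks
  below \<open>r\<close> are already those of \<open>z (k+1)\<close> and whose other blocks are still those of \<open>z k\<close>;
  the \<open>v\<close>-step varies \<open>v\<^sup>r\<close> after \<open>u\<^sup>r\<close> has been updated.\<close>

definition u_slice :: "nat \<Rightarrow> 'r \<Rightarrow> real^'n1 \<Rightarrow> ('n1,'n2,'r) pt" where
  "u_slice k r x = (mix (fst (z (Suc k))) (fst (z k)) r x, mix (snd (z (Suc k))) (snd (z k)) r (snd (z k) $ r))"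

definition v_slice :: "nat \<Rightarrow> 'r \<Rightarrow> real^'n2 \<Rightarrow> ('n1,'n2,'r) pt" where
  "v_slice k r y = (mix (fst (z (Suc k))) (fst (z k)) r (fst (z (Suc k)) $ r), mix (snd (z (Suc k))) (snd (z k)) r y)"

definition "before_u k r = u_slice k r (fst (z k) $ r)"
definition "after_u k r = u_slice k r (fst (z (Suc k)) $ r)"
definition "after_v k r = v_slice k r (snd (z (Suc k)) $ r)"

lemma after_u_eq_v_slice: "after_u k r = v_slice k r (snd (z k) $ r)"
  unfolding after_u_def u_slice_def v_slice_def by simp

lemma u_step:
  "L (after_u k r) + ereal ((norm (fst (z (Suc k)) $ r - fst (z k) $ r))\<^sup>2 / (2 * lam k r))
     \<le> L (u_slice k r x) + ereal ((norm (x - fst (z k) $ r))\<^sup>2 / (2 * lam k r))"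
  using PAM unfolding PAM_seq_def Let_def after_u_def u_slice_def by blast

lemma v_step:
  "L (after_v k r) + ereal ((norm (snd (z (Suc k)) $ r - snd (z k) $ r))\<^sup>2 / (2 * mu k r))
     \<le> L (v_slice k r y) + ereal ((norm (y - snd (z k) $ r))\<^sup>2 / (2 * mu k r))"
  using PAM unfolding PAM_seq_def Let_def after_v_def v_slice_def by blast

definition block_gain :: "nat \<Rightarrow> 'r \<Rightarrow> real" where
  "block_gain k r = ((norm (fst (z (Suc k)) $ r - fst (z k) $ r))\<^sup>2
                      + (norm (snd (z (Suc k)) $ r - snd (z k) $ r))\<^sup>2) / (2 * rplus)"

lemma block_gain_nonneg: "0 \<le> block_gain k r"
  unfolding block_gain_def using rplus_pos by simp

lemma sum_block_gain: "(\<Sum>r\<in>UNIV. block_gain k r) = (norm (z (Suc k) - z k))\<^sup>2 / (2 * rplus)"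
  unfolding block_gain_def sum_divide_distrib[symmetric] sum.distrib
  by (simp add: norm_pt_power2[of "z (Suc k) - z k"])

lemma divide_rplus_le: "0 \<le> a \<Longrightarrow> rminus < l \<Longrightarrow> l < rplus \<Longrightarrow> a / (2 * rplus) \<le> a / (2 * l)"
  using rminus_pos by (intro frac_le) auto

lemma block_descent: "L (after_v k r) + ereal (block_gain k r) \<le> L (before_u k r)"
  and after_u_descent: "L (after_u k r) \<le> L (before_u k r)"
proof -
  define a where "a = (norm (fst (z (Suc k)) $ r - fst (z k) $ r))\<^sup>2 / (2 * rplus)"
  define b where "b = (norm (snd (z (Suc k)) $ r - snd (z k) $ r))\<^sup>2 / (2 * rplus)"
  have "0 \<le> a" unfolding a_def using rplus_pos by simp
  have "L (after_u k r) + ereal a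
      \<le> L (after_u k r) + ereal ((norm (fst (z (Suc k)) $ r - fst (z k) $ r))\<^sup>2 / (2 * lam k r))"
    unfolding a_def using lam_bnd[of k r] divide_rplus_le[of _ "lam k r"] by (intro add_left_mono) simp
  also have "\<dots> \<le> L (before_u k r)"
    using u_step[of k r "fst (z k) $ r"] unfolding before_u_def by simp
  finally have u: "L (after_u k r) + ereal a \<le> L (before_u k r)" .
  with \<open>0 \<le> a\<close> show "L (after_u k r) \<le> L (before_u k r)" by (rule ereal_le_if_add_nonneg_le)
  have "L (after_v k r) + ereal b
      \<le> L (after_v k r) + ereal ((norm (snd (z (Suc k)) $ r - snd (z k) $ r))\<^sup>2 / (2 * mu k r))"
    unfolding b_def using mu_bnd[of k r] divide_rplus_le[of _ "mu k r"] by (intro add_left_mono) simp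
  also have "\<dots> \<le> L (after_u k r)"
    using v_step[of k r "snd (z k) $ r"] unfolding after_u_eq_v_slice by simp
  finally have "L (after_v k r) + ereal b + ereal a \<le> L (after_u k r) + ereal a"
    by (rule add_right_mono)
  also note u
  finally have "L (after_v k r) + ereal b + ereal a \<le> L (before_u k r)" .
  moreover have "block_gain k r = a + b"
    unfolding block_gain_def add_divide_distrib a_def b_def ..
  ultimately show "L (after_v k r) + ereal (block_gain k r) \<le> L (before_u k r)"
    by (cases "L (after_v k r)") (simp_all add: ac_simps)
qed

lemma before_u_first: "{s. s < r} = {} \<Longrightarrow> before_u k r = z k"
  unfolding before_u_def u_slice_def by (auto simp: prod_eq_iff vec_eq_iff mix_nth)

lemma before_u_eq_after_v_pred:
  assumes "{s. s < r} \<noteq> {}"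
  shows "before_u k r = after_v k (Max {s. s < r})"
proof -
  define p where "p = Max {s. s < r}"
  have "p < r" using assms Max_in[of "{s. s < r}"] unfolding p_def by auto
  moreover have "s < r \<longleftrightarrow> s \<le> p" for s
    using \<open>p < r\<close> unfolding p_def by (auto intro: Max_ge)
  ultimately show ?thesis
    unfolding before_u_def after_v_def u_slice_def v_slice_def p_def[symmetric]
    by (simp add: mix_predecessor)
qed

lemma after_v_last: "after_v k (Max UNIV) = z (Suc k)"
  unfolding after_v_def v_slice_def mix_Max by simp

lemma before_u_descent_card:
  "card {s. s < r} = n \<Longrightarrow> L (before_u k r) + ereal (\<Sum>s\<in>{s. s < r}. block_gain k s) \<le> L (z k)"
proof (induction n arbitrary: r)
  case 0
  then have "{s. s < r} = {}" by simp
  then show ?case using before_u_first[of r k] by simp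
next
  case (Suc n)
  have ne: "{s. s < r} \<noteq> {}"
  proof
    assume "{s. s < r} = {}"
    with Suc.prems show False by simp
  qed
  define p where "p = Max {s. s < r}"
  have "p < r" using ne Max_in[of "{s. s < r}"] unfolding p_def by auto
  have le: "s < r \<Longrightarrow> s \<le> p" for s unfolding p_def by (auto intro: Max_ge)
  have split: "{s. s < r} = insert p {s. s < p}"
  proof (intro set_eqI iffI)
    fix s assume "s \<in> {s. s < r}" then show "s \<in> insert p {s. s < p}" using le[of s] by auto
  next
    fix s assume "s \<in> insert p {s. s < p}" then show "s \<in> {s. s < r}" using \<open>p < r\<close> by auto
  qed
  have p_notin: "p \<notin> {s. s < p}" by simp
  have "card {s. s < p} = n" using Suc.prems unfolding split using p_notin by simp
  then have IH: "L (before_u k p) + ereal (\<Sum>s\<in>{s. s < p}. block_gain k s) \<le> L (z k)"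
    by (rule Suc.IH)
  have "L (before_u k r) + ereal (\<Sum>s\<in>{s. s < r}. block_gain k s)
      = (L (after_v k p) + ereal (block_gain k p)) + ereal (\<Sum>s\<in>{s. s < p}. block_gain k s)"
    unfolding before_u_eq_after_v_pred[OF ne] unfolding p_def[symmetric] unfolding split
    by (simp add: sum.insert[OF _ p_notin] add.assoc)
  also have "\<dots> \<le> L (before_u k p) + ereal (\<Sum>s\<in>{s. s < p}. block_gain k s)"
    by (intro add_right_mono block_descent)
  finally show ?case using IH by simp
qed

lemmas before_u_descent = before_u_descent_card[OF refl]

lemma sufficient_decrease: "L (z (Suc k)) + ereal ((norm (z (Suc k) - z k))\<^sup>2 / (2 * rplus)) \<le> L (z k)"
proof -
  define m where "m = Max (UNIV :: 'r set)"
  have split: "(UNIV :: 'r set) = insert m {s. s < m}"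
    unfolding m_def using Max_ge[of "UNIV :: 'r set"] by (auto simp: less_le)
  have m_notin: "m \<notin> {s. s < m}" by simp
  have sum_split: "(\<Sum>s\<in>UNIV. block_gain k s) = block_gain k m + (\<Sum>s\<in>{s. s < m}. block_gain k s)"
    by (subst split) (simp add: sum.insert[OF _ m_notin])
  have "L (z (Suc k)) + ereal ((norm (z (Suc k) - z k))\<^sup>2 / (2 * rplus))
      = (L (after_v k m) + ereal (block_gain k m)) + ereal (\<Sum>s\<in>{s. s < m}. block_gain k s)"
    unfolding sum_block_gain[symmetric] sum_split m_def after_v_last by (simp add: add.assoc)
  also have "\<dots> \<le> L (before_u k m) + ereal (\<Sum>s\<in>{s. s < m}. block_gain k s)"
    by (intro add_right_mono block_descent)
  also have "\<dots> \<le> L (z k)" by (rule before_u_descent)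
  finally show ?thesis .
qed

lemma L_before_u_le: "L (before_u k r) \<le> L (z k)"
  using sum_nonneg[OF block_gain_nonneg] before_u_descent by (rule ereal_le_if_add_nonneg_le)

lemma L_after_u_le: "L (after_u k r) \<le> L (z k)"
  using after_u_descent L_before_u_le by (rule order_trans)

lemma L_after_v_le: "L (after_v k r) \<le> L (z k)"
  using ereal_le_if_add_nonneg_le[OF block_gain_nonneg block_descent] L_before_u_le by (rule order_trans)

lemma L_finite_if_le: "L p \<le> L (z k) \<Longrightarrow> \<bar>L p\<bar> \<noteq> \<infinity>"
proof -
  obtain m where "\<And>x. ereal m \<le> L x" using L_bdd_below by blast
  from this[of p] have "L p \<noteq> -\<infinity>" by auto
  then show "L p \<le> L (z k) \<Longrightarrow> \<bar>L p\<bar> \<noteq> \<infinity>" using L_z_finite[of k] by auto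
qed

lemma f_not_MInfty: "f r x \<noteq> -\<infinity>"
  using f_proper[of r] unfolding proper_fun_def by blast

lemma g_not_MInfty: "g r y \<noteq> -\<infinity>"
  using g_proper[of r] unfolding proper_fun_def by blast

lemma L_u_slice: "\<exists>R. R \<noteq> -\<infinity> \<and> (\<forall>x. L (u_slice k r x) = f r x + R + ereal (Q (u_slice k r x)))"
proof (intro exI conjI allI)
  define R where "R = (\<Sum>s\<in>UNIV - {r}. f s (fst (after_u k r) $ s)) + (\<Sum>s\<in>UNIV. g s (snd (after_u k r) $ s))"
  show "R \<noteq> -\<infinity>"
    unfolding R_def by (simp add: sum_ereal_not_MInfty f_not_MInfty g_not_MInfty)
  fix x
  have "(\<Sum>s\<in>UNIV. f s (fst (u_slice k r x) $ s))
      = f r x + (\<Sum>s\<in>UNIV - {r}. f s (fst (u_slice k r x) $ s))"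
    by (subst sum.remove[of UNIV r]) (simp_all add: u_slice_def mix_nth)
  also have "(\<Sum>s\<in>UNIV - {r}. f s (fst (u_slice k r x) $ s)) = (\<Sum>s\<in>UNIV - {r}. f s (fst (after_u k r) $ s))"
    by (rule sum.cong) (auto simp: u_slice_def after_u_def mix_nth)
  finally show "L (u_slice k r x) = f r x + R + ereal (Q (u_slice k r x))"
    unfolding L_def Lfun_def R_def by (simp add: u_slice_def after_u_def ac_simps)
qed

lemma L_v_slice: "\<exists>R. R \<noteq> -\<infinity> \<and> (\<forall>y. L (v_slice k r y) = g r y + R + ereal (Q (v_slice k r y)))"
proof (intro exI conjI allI)
  define R where "R = (\<Sum>s\<in>UNIV. f s (fst (after_v k r) $ s)) + (\<Sum>s\<in>UNIV - {r}. g s (snd (after_v k r) $ s))"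
  show "R \<noteq> -\<infinity>"
    unfolding R_def by (simp add: sum_ereal_not_MInfty f_not_MInfty g_not_MInfty)
  fix y
  have "(\<Sum>s\<in>UNIV. g s (snd (v_slice k r y) $ s))
      = g r y + (\<Sum>s\<in>UNIV - {r}. g s (snd (v_slice k r y) $ s))"
    by (subst sum.remove[of UNIV r]) (simp_all add: v_slice_def mix_nth)
  also have "(\<Sum>s\<in>UNIV - {r}. g s (snd (v_slice k r y) $ s)) = (\<Sum>s\<in>UNIV - {r}. g s (snd (after_v k r) $ s))"
    by (rule sum.cong) (auto simp: v_slice_def after_v_def mix_nth)
  finally show "L (v_slice k r y) = g r y + R + ereal (Q (v_slice k r y))"
    unfolding L_def Lfun_def R_def by (simp add: v_slice_def after_v_def ac_simps)
qed

definition "u_smooth k r x = Q (u_slice k r x) + (norm (x - fst (z k) $ r))\<^sup>2 / (2 * lam k r)"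
definition "v_smooth k r y = Q (v_slice k r y) + (norm (y - snd (z k) $ r))\<^sup>2 / (2 * mu k r)"

lemma u_block_optimality:
  "\<bar>f r (fst (z (Suc k)) $ r)\<bar> \<noteq> \<infinity>"
  "f r (fst (z (Suc k)) $ r) \<le> f r x + ereal (u_smooth k r x - u_smooth k r (fst (z (Suc k)) $ r))"
proof -
  obtain R where "R \<noteq> -\<infinity>" and "\<And>x. L (u_slice k r x) = f r x + R + ereal (Q (u_slice k r x))"
    using L_u_slice by blast
  from prox_block_optimality[where P = "u_slice k r" and xmin = "fst (z (Suc k)) $ r"
      and xprev = "fst (z k) $ r" and c = "lam k r", OF this(2) u_step[unfolded after_u_def] _ this(1) f_not_MInfty]
  show "\<bar>f r (fst (z (Suc k)) $ r)\<bar> \<noteq> \<infinity>"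
    "f r (fst (z (Suc k)) $ r) \<le> f r x + ereal (u_smooth k r x - u_smooth k r (fst (z (Suc k)) $ r))"
    using L_finite_if_le[OF L_after_u_le] unfolding after_u_def u_smooth_def[abs_def] by auto
qed

lemma v_block_optimality:
  "\<bar>g r (snd (z (Suc k)) $ r)\<bar> \<noteq> \<infinity>"
  "g r (snd (z (Suc k)) $ r) \<le> g r y + ereal (v_smooth k r y - v_smooth k r (snd (z (Suc k)) $ r))"
proof -
  obtain R where "R \<noteq> -\<infinity>" and "\<And>y. L (v_slice k r y) = g r y + R + ereal (Q (v_slice k r y))"
    using L_v_slice by blast
  from prox_block_optimality[where P = "v_slice k r" and xmin = "snd (z (Suc k)) $ r"
      and xprev = "snd (z k) $ r" and c = "mu k r", OF this(2) v_step[unfolded after_v_def] _ this(1) g_not_MInfty]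
  show "\<bar>g r (snd (z (Suc k)) $ r)\<bar> \<noteq> \<infinity>"
    "g r (snd (z (Suc k)) $ r) \<le> g r y + ereal (v_smooth k r y - v_smooth k r (snd (z (Suc k)) $ r))"
    using L_finite_if_le[OF L_after_v_le] unfolding after_v_def v_smooth_def[abs_def] by auto
qed

definition "u_grad k r = fst (gradQ (after_u k r)) $ r + (1 / lam k r) *\<^sub>R (fst (z (Suc k)) $ r - fst (z k) $ r)"
definition "v_grad k r = snd (gradQ (after_v k r)) $ r + (1 / mu k r) *\<^sub>R (snd (z (Suc k)) $ r - snd (z k) $ r)"

lemma u_grad_frechet_subdiff: "- u_grad k r \<in> frechet_subdiff (f r) (fst (z (Suc k)) $ r)"
proof (rule frechet_subdiff_at_min_plus_smooth[where h = "u_smooth k r", OF u_block_optimality])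
  have "(u_slice k r has_derivative (\<lambda>h. (axis r h, 0))) (at (fst (z (Suc k)) $ r))"
    unfolding u_slice_def[abs_def] by (intro has_derivative_Pair has_derivative_mix has_derivative_const)
  from has_derivative_compose[OF this Q_grad]
  have "((\<lambda>x. Q (u_slice k r x)) has_derivative (\<lambda>h. inner (fst (gradQ (after_u k r)) $ r) h))
      (at (fst (z (Suc k)) $ r))"
    unfolding after_u_def by (simp add: inner_Pair_0 inner_axis)
  from has_derivative_add[OF this has_derivative_norm_power2_div]
  show "(u_smooth k r has_derivative (\<lambda>h. inner (u_grad k r) h)) (at (fst (z (Suc k)) $ r))"
    using lam_bnd[of k r] rminus_pos unfolding u_smooth_def[abs_def] u_grad_def
    by (simp add: inner_add_left)
qed

lemma v_grad_frechet_subdiff: "- v_grad k r \<in> frechet_subdiff (g r) (snd (z (Suc k)) $ r)"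
proof (rule frechet_subdiff_at_min_plus_smooth[where h = "v_smooth k r", OF v_block_optimality])
  have "(v_slice k r has_derivative (\<lambda>h. (0, axis r h))) (at (snd (z (Suc k)) $ r))"
    unfolding v_slice_def[abs_def] by (intro has_derivative_Pair has_derivative_mix has_derivative_const)
  from has_derivative_compose[OF this Q_grad]
  have "((\<lambda>y. Q (v_slice k r y)) has_derivative (\<lambda>h. inner (snd (gradQ (after_v k r)) $ r) h))
      (at (snd (z (Suc k)) $ r))"
    unfolding after_v_def by (simp add: inner_Pair_0 inner_axis)
  from has_derivative_add[OF this has_derivative_norm_power2_div]
  show "(v_smooth k r has_derivative (\<lambda>h. inner (v_grad k r) h)) (at (snd (z (Suc k)) $ r))"
    using mu_bnd[of k r] rminus_pos unfolding v_smooth_def[abs_def] v_grad_def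
    by (simp add: inner_add_left)
qed

definition "W k = (\<chi> r. - u_grad k r, \<chi> r. - v_grad k r) + gradQ (z (Suc k))"

lemma W_frechet_subdiff: "W k \<in> frechet_subdiff L (z (Suc k))"
  unfolding W_def L_def by (rule frechet_subdiff_Lfun[OF u_grad_frechet_subdiff v_grad_frechet_subdiff Q_grad])

lemma after_u_blocks_from: "blocks_from (after_u k r) (z (Suc k)) (z k)"
  unfolding blocks_from_def after_u_def u_slice_def by (auto simp: mix_nth)

lemma after_v_blocks_from: "blocks_from (after_v k r) (z (Suc k)) (z k)"
  unfolding blocks_from_def after_v_def v_slice_def by (auto simp: mix_nth)

lemma W_norm_le:
  assumes lip: "C-lipschitz_on S gradQ" and "z (Suc k) \<in> S"
    and "\<And>r. after_u k r \<in> S" and "\<And>r. after_v k r \<in> S"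
  shows "norm (W k) \<le> (C * sqrt (2 * real CARD('r)) + 1 / rminus) * norm (z (Suc k) - z k)"
proof -
  define d where "d = norm (z (Suc k) - z k)"
  define D where "D = (\<chi> r. fst (gradQ (z (Suc k))) $ r - fst (gradQ (after_u k r)) $ r,
                       \<chi> r. snd (gradQ (z (Suc k))) $ r - snd (gradQ (after_v k r)) $ r)"
  define E where "E = (\<chi> r. (1 / lam k r) *\<^sub>R (fst (z (Suc k)) $ r - fst (z k) $ r),
                       \<chi> r. (1 / mu k r) *\<^sub>R (snd (z (Suc k)) $ r - snd (z k) $ r))"
  have "W k = D - E"
    unfolding W_def D_def E_def u_grad_def v_grad_def by (simp add: prod_eq_iff vec_eq_iff)
  have grad_close: "norm (gradQ (z (Suc k)) - gradQ p) \<le> C * d"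
    if "p \<in> S" and "blocks_from p (z (Suc k)) (z k)" for p
  proof -
    have "norm (gradQ (z (Suc k)) - gradQ p) \<le> C * norm (z (Suc k) - p)"
      using lip \<open>z (Suc k) \<in> S\<close> \<open>p \<in> S\<close> unfolding lipschitz_on_def dist_norm by blast
    also have "\<dots> \<le> C * d"
      using blocks_from_dist_le[OF that(2)] lip unfolding d_def lipschitz_on_def
      by (intro mult_left_mono) (auto simp: norm_minus_commute)
    finally show ?thesis .
  qed
  have "norm D \<le> sqrt (2 * real CARD('r)) * (C * d)"
  proof (rule norm_pt_le_if_blocks_bounded)
    show "norm (fst D $ r) \<le> C * d" for r
      using order_trans[OF norm_fst_nth_le grad_close[OF assms(3) after_u_blocks_from]]
      unfolding D_def by simp
    show "norm (snd D $ r) \<le> C * d" for r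
      using order_trans[OF norm_snd_nth_le grad_close[OF assms(4) after_v_blocks_from]]
      unfolding D_def by simp
  qed
  moreover have "norm E \<le> (1 / rminus) * d"
    unfolding d_def
  proof (rule norm_pt_le_if_blocks_le)
    have "(1 / l) * a \<le> (1 / rminus) * a" if "rminus < l" and "0 \<le> a" for l a :: real
      using that rminus_pos by (intro mult_right_mono) (auto simp: frac_le)
    then show "norm (fst E $ r) \<le> 1 / rminus * norm (fst (z (Suc k) - z k) $ r)"
      and "norm (snd E $ r) \<le> 1 / rminus * norm (snd (z (Suc k) - z k) $ r)" for r
      using lam_bnd[of k r] mu_bnd[of k r] rminus_pos unfolding E_def by auto
  qed (use rminus_pos in simp)
  ultimately have "norm (W k) \<le> sqrt (2 * real CARD('r)) * (C * d) + (1 / rminus) * d"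
    unfolding \<open>W k = D - E\<close> using norm_triangle_ineq4[of D E] by linarith
  then show ?thesis unfolding d_def by (simp add: algebra_simps)
qed

lemma tendsto_u_slice:
  assumes "z \<longlonglongrightarrow> zs" and "X \<longlonglongrightarrow> fst zs $ r"
  shows "(\<lambda>k. u_slice k r (X k)) \<longlonglongrightarrow> zs"
proof -
  have "(\<lambda>k. z (Suc k)) \<longlonglongrightarrow> zs" using assms(1) by (rule LIMSEQ_Suc)
  then have "(\<lambda>k. u_slice k r (X k)) \<longlonglongrightarrow> (mix (fst zs) (fst zs) r (fst zs $ r), mix (snd zs) (snd zs) r (snd zs $ r))"
    unfolding u_slice_def using assms by (intro tendsto_intros)
  then show ?thesis by (simp add: mix_same)
qed

lemma tendsto_v_slice:
  assumes "z \<longlonglongrightarrow> zs" and "Y \<longlonglongrightarrow> snd zs $ r"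
  shows "(\<lambda>k. v_slice k r (Y k)) \<longlonglongrightarrow> zs"
proof -
  have "(\<lambda>k. z (Suc k)) \<longlonglongrightarrow> zs" using assms(1) by (rule LIMSEQ_Suc)
  then have "(\<lambda>k. v_slice k r (Y k)) \<longlonglongrightarrow> (mix (fst zs) (fst zs) r (fst zs $ r), mix (snd zs) (snd zs) r (snd zs $ r))"
    unfolding v_slice_def using assms by (intro tendsto_intros)
  then show ?thesis by (simp add: mix_same)
qed

lemma f_tendsto:
  assumes zs: "z \<longlonglongrightarrow> zs"
  shows "(\<lambda>k. f r (fst (z (Suc k)) $ r)) \<longlonglongrightarrow> f r (fst zs $ r)"
proof (rule lsc_fun_tendsto_if_le_vanishing[OF f_lsc _ f_not_MInfty u_block_optimality(2)])
  have Suc: "(\<lambda>k. z (Suc k)) \<longlonglongrightarrow> zs" using zs by (rule LIMSEQ_Suc)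
  then show X: "(\<lambda>k. fst (z (Suc k)) $ r) \<longlonglongrightarrow> fst zs $ r" by (intro tendsto_intros)
  have Q: "isCont Q p" for p using has_derivative_continuous[OF Q_grad] .
  have "(\<lambda>k. Q (u_slice k r (fst zs $ r))) \<longlonglongrightarrow> Q zs"
    and "(\<lambda>k. Q (u_slice k r (fst (z (Suc k)) $ r))) \<longlonglongrightarrow> Q zs"
    using tendsto_u_slice[OF zs] X by (auto intro!: isCont_tendsto_compose[OF Q])
  moreover have "(\<lambda>k. (norm (fst zs $ r - fst (z k) $ r))\<^sup>2 / (2 * lam k r)) \<longlonglongrightarrow> 0"
    and "(\<lambda>k. (norm (fst (z (Suc k)) $ r - fst (z k) $ r))\<^sup>2 / (2 * lam k r)) \<longlonglongrightarrow> 0"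
    using zs Suc lam_bnd rminus_pos
    by (auto intro!: tendsto_norm_power2_div_zero[where c = rminus] tendsto_eq_intros less_imp_le)
  ultimately show "(\<lambda>k. u_smooth k r (fst zs $ r) - u_smooth k r (fst (z (Suc k)) $ r)) \<longlonglongrightarrow> 0"
    unfolding u_smooth_def using tendsto_diff[OF tendsto_add tendsto_add] by fastforce
qed

lemma g_tendsto:
  assumes zs: "z \<longlonglongrightarrow> zs"
  shows "(\<lambda>k. g r (snd (z (Suc k)) $ r)) \<longlonglongrightarrow> g r (snd zs $ r)"
proof (rule lsc_fun_tendsto_if_le_vanishing[OF g_lsc _ g_not_MInfty v_block_optimality(2)])
  have Suc: "(\<lambda>k. z (Suc k)) \<longlonglongrightarrow> zs" using zs by (rule LIMSEQ_Suc)
  then show Y: "(\<lambda>k. snd (z (Suc k)) $ r) \<longlonglongrightarrow> snd zs $ r" by (intro tendsto_intros)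
  have Q: "isCont Q p" for p using has_derivative_continuous[OF Q_grad] .
  have "(\<lambda>k. Q (v_slice k r (snd zs $ r))) \<longlonglongrightarrow> Q zs"
    and "(\<lambda>k. Q (v_slice k r (snd (z (Suc k)) $ r))) \<longlonglongrightarrow> Q zs"
    using tendsto_v_slice[OF zs] Y by (auto intro!: isCont_tendsto_compose[OF Q])
  moreover have "(\<lambda>k. (norm (snd zs $ r - snd (z k) $ r))\<^sup>2 / (2 * mu k r)) \<longlonglongrightarrow> 0"
    and "(\<lambda>k. (norm (snd (z (Suc k)) $ r - snd (z k) $ r))\<^sup>2 / (2 * mu k r)) \<longlonglongrightarrow> 0"
    using zs Suc mu_bnd rminus_pos
    by (auto intro!: tendsto_norm_power2_div_zero[where c = rminus] tendsto_eq_intros less_imp_le)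
  ultimately show "(\<lambda>k. v_smooth k r (snd zs $ r) - v_smooth k r (snd (z (Suc k)) $ r)) \<longlonglongrightarrow> 0"
    unfolding v_smooth_def using tendsto_diff[OF tendsto_add tendsto_add] by fastforce
qed

lemma L_tendsto:
  assumes zs: "z \<longlonglongrightarrow> zs"
  shows "(\<lambda>k. L (z (Suc k))) \<longlonglongrightarrow> L zs"
proof -
  have "(\<lambda>k. Q (z (Suc k))) \<longlonglongrightarrow> Q zs"
    using has_derivative_continuous[OF Q_grad] LIMSEQ_Suc[OF zs] by (rule isCont_tendsto_compose)
  with f_tendsto[OF zs] g_tendsto[OF zs] show ?thesis
    unfolding L_def by (intro tendsto_Lfun f_not_MInfty g_not_MInfty)
qed

end

section \<open>Finite length under the KL property\<close>

locale pam_KL = pam f g Q gradQ lam mu rminus rplus z L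
  for f :: "'r::{finite,linorder} \<Rightarrow> real^'n1::finite \<Rightarrow> ereal"
    and g :: "'r \<Rightarrow> real^'n2::finite \<Rightarrow> ereal"
    and Q :: "('n1,'n2,'r) pt \<Rightarrow> real"
    and gradQ :: "('n1,'n2,'r) pt \<Rightarrow> ('n1,'n2,'r) pt"
    and lam mu :: "nat \<Rightarrow> 'r \<Rightarrow> real"
    and rminus rplus :: real
    and z :: "nat \<Rightarrow> ('n1,'n2,'r) pt"
    and L :: "('n1,'n2,'r) pt \<Rightarrow> ereal" +
  fixes zbar :: "('n1,'n2,'r) pt"
    and \<eta> :: ereal and U :: "('n1,'n2,'r) pt set" and \<phi> :: "real \<Rightarrow> real"
    and \<rho> C M :: real
  assumes KL: "KL_at L zbar \<eta> U \<phi>"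
    and rho_pos: "\<rho> > 0" and ball_U: "ball zbar \<rho> \<subseteq> U"
    and C_lip: "C-lipschitz_on (ball zbar (sqrt (2 * real CARD('r)) * \<rho>)) gradQ"
    and M_def: "M = 2 * rplus * (C * sqrt (2 * real CARD('r)) + 1 / rminus)"
    and l_bounds: "\<And>k. L zbar < L (z k) \<and> L (z k) < L zbar + \<eta>"
    and init: "M * \<phi> (real_of_ereal (L (z 0)) - real_of_ereal (L zbar))
               + 2 * sqrt (2 * rplus) * sqrt (real_of_ereal (L (z 0)) - real_of_ereal (L zbar))
               + norm (z 0 - zbar) < \<rho>"
begin

definition "lbar = real_of_ereal (L zbar)"
definition "l k = real_of_ereal (L (z k))"
definition "d k = norm (z (Suc k) - z k)"
definition "phi_gap k = \<phi> (l k - lbar)"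
definition "W_factor = C * sqrt (2 * real CARD('r)) + 1 / rminus"

lemma M_eq: "M = 2 * rplus * W_factor"
  unfolding M_def W_factor_def ..

lemma M_nonneg: "0 \<le> M"
proof -
  have "0 \<le> C" using C_lip unfolding lipschitz_on_def by blast
  then show ?thesis unfolding M_eq W_factor_def using rminus_pos rplus_pos by simp
qed

lemma L_z_eq: "L (z k) = ereal (l k)"
  unfolding l_def using L_z_finite[of k] by (cases "L (z k)") auto

lemma L_zbar_eq: "L zbar = ereal lbar"
proof -
  obtain m where "ereal m \<le> L zbar" using L_bdd_below by blast
  moreover have "L zbar < \<infinity>" using l_bounds[of 0] by (auto simp: less_le)
  ultimately show ?thesis unfolding lbar_def by (cases "L zbar") auto
qed

lemma lbar_less: "lbar < l k"
  using l_bounds[of k] unfolding L_z_eq L_zbar_eq by simp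

lemma gap_less_eta: "ereal (l k - lbar) < \<eta>"
  using l_bounds[of k] unfolding L_z_eq L_zbar_eq by (cases \<eta>) auto

lemma d_power2_le: "(d k)\<^sup>2 \<le> 2 * rplus * (l k - l (Suc k))"
  using sufficient_decrease[of k] rplus_pos unfolding L_z_eq d_def by (simp add: field_simps)

lemma l_decreasing: "l (Suc k) \<le> l k"
  using order_trans[OF zero_le_power2 d_power2_le] rplus_pos by (simp add: zero_le_mult_iff)

lemma d_le_sqrt_gap: "d k \<le> sqrt (2 * rplus) * sqrt (l k - lbar)"
proof -
  have "(d k)\<^sup>2 \<le> 2 * rplus * (l k - lbar)"
    using d_power2_le[of k] lbar_less[of "Suc k"] rplus_pos
    by (smt (verit, best) mult_left_mono)
  then show ?thesis
    unfolding real_sqrt_mult[symmetric] d_def by (rule real_le_rsqrt)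
qed

lemma phi_concave: "concave_on {t. 0 \<le> t \<and> ereal t < \<eta>} \<phi>"
  and phi_differentiable: "\<And>t. 0 < t \<Longrightarrow> ereal t < \<eta> \<Longrightarrow> \<phi> differentiable (at t)"
  and phi_deriv_pos: "\<And>t. 0 < t \<Longrightarrow> ereal t < \<eta> \<Longrightarrow> deriv \<phi> t > 0"
  and phi_nonneg: "\<And>t. 0 \<le> t \<Longrightarrow> ereal t < \<eta> \<Longrightarrow> 0 \<le> \<phi> t"
  and KL_inequality: "\<And>x. x \<in> U \<Longrightarrow> L zbar < L x \<Longrightarrow> L x < L zbar + \<eta> \<Longrightarrow>
        limiting_subdiff L x = {} \<or> deriv \<phi> (real_of_ereal (L x - L zbar)) * infdist 0 (limiting_subdiff L x) \<ge> 1"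
  using KL unfolding KL_at_def by blast+

lemma phi_gap_nonneg: "0 \<le> phi_gap k"
  unfolding phi_gap_def using phi_nonneg lbar_less gap_less_eta by (simp add: less_imp_le)

lemma phi_gap_tangent: "deriv \<phi> (l j - lbar) * (l j - l k) \<le> phi_gap j - phi_gap k"
  using concave_on_below_tangent[OF phi_concave phi_differentiable, of "l j - lbar" "l k - lbar"]
    lbar_less gap_less_eta unfolding phi_gap_def by simp

lemma phi_gap_decreasing: "phi_gap (Suc k) \<le> phi_gap k"
  using phi_gap_tangent[of k "Suc k"] phi_deriv_pos[OF _ gap_less_eta, of k] lbar_less[of k]
    l_decreasing[of k] by (smt (verit) mult_nonneg_nonneg)

lemma blocks_from_in_big_ball:
  assumes "z k \<in> ball zbar \<rho>" and "z (Suc k) \<in> ball zbar \<rho>" and "blocks_from p (z (Suc k)) (z k)"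
  shows "p \<in> ball zbar (sqrt (2 * real CARD('r)) * \<rho>)"
proof -
  have "(norm (p - zbar))\<^sup>2 \<le> (norm (z (Suc k) - zbar))\<^sup>2 + (norm (z k - zbar))\<^sup>2"
    by (rule blocks_from_norm_power2_le[OF assms(3)])
  also have "\<dots> < \<rho>\<^sup>2 + \<rho>\<^sup>2"
    using assms(1,2) by (intro add_strict_mono power_strict_mono) (auto simp: dist_norm norm_minus_commute)
  also have "\<dots> \<le> (sqrt (2 * real CARD('r)) * \<rho>)\<^sup>2"
  proof -
    have "1 \<le> real CARD('r)" by (simp add: Suc_le_eq)
    from mult_right_mono[OF this zero_le_power2[of \<rho>]] show ?thesis by (simp add: power_mult_distrib)
  qed
  finally have "norm (p - zbar) < sqrt (2 * real CARD('r)) * \<rho>"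
    by (rule power2_less_imp_less) (use rho_pos in simp)
  then show ?thesis by (simp add: dist_norm norm_minus_commute)
qed

lemma W_norm_le_d:
  assumes "z k \<in> ball zbar \<rho>" and "z (Suc k) \<in> ball zbar \<rho>"
  shows "norm (W k) \<le> W_factor * d k"
  using W_norm_le[OF C_lip blocks_from_in_big_ball[OF assms]
      blocks_from_in_big_ball[OF assms after_u_blocks_from] blocks_from_in_big_ball[OF assms after_v_blocks_from]]
  unfolding W_factor_def d_def by (simp add: blocks_from_def)

lemma KL_step:
  assumes "z k \<in> ball zbar \<rho>" and "z (Suc k) \<in> ball zbar \<rho>"
  shows "2 * d (Suc k) \<le> d k + M * (phi_gap (Suc k) - phi_gap (Suc (Suc k)))"
proof -
  define p where "p = deriv \<phi> (l (Suc k) - lbar)"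
  define \<Delta> where "\<Delta> = phi_gap (Suc k) - phi_gap (Suc (Suc k))"
  have p_pos: "0 < p" unfolding p_def using phi_deriv_pos lbar_less gap_less_eta by simp
  have "\<Delta> \<ge> 0" unfolding \<Delta>_def using phi_gap_decreasing by simp
  have W: "W k \<in> limiting_subdiff L (z (Suc k))"
    by (rule frechet_subdiff_imp_limiting_subdiff[OF W_frechet_subdiff])
  have "z (Suc k) \<in> U" using assms(2) ball_U by blast
  from KL_inequality[OF this] l_bounds[of "Suc k"] W
  have "1 \<le> p * infdist 0 (limiting_subdiff L (z (Suc k)))"
    unfolding p_def L_z_eq L_zbar_eq by auto
  also have "\<dots> \<le> p * (W_factor * d k)"
    using infdist_le[OF W, of 0] W_norm_le_d[OF assms] p_pos by (intro mult_left_mono) auto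
  finally have inv_p: "1 / p \<le> W_factor * d k" using p_pos by (simp add: field_simps)
  have "(d (Suc k))\<^sup>2 \<le> 2 * rplus * (l (Suc k) - l (Suc (Suc k)))" by (rule d_power2_le)
  also have "\<dots> \<le> 2 * rplus * (\<Delta> * (1 / p))"
    using phi_gap_tangent[of "Suc k" "Suc (Suc k)"] p_pos rplus_pos
    unfolding \<Delta>_def p_def[symmetric] by (intro mult_left_mono) (simp_all add: field_simps)
  also have "\<dots> \<le> 2 * rplus * (\<Delta> * (W_factor * d k))"
    using inv_p \<open>\<Delta> \<ge> 0\<close> rplus_pos by (intro mult_left_mono) simp_all
  also have "\<dots> = (M * \<Delta>) * d k" unfolding M_eq by simp
  finally have "2 * d (Suc k) \<le> M * \<Delta> + d k"
    using M_nonneg \<open>\<Delta> \<ge> 0\<close> by (intro double_le_add_if_power2_le_mult) (simp_all add: d_def)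
  then show ?thesis unfolding \<Delta>_def by simp
qed

lemma d_sum_telescoping:
  assumes "\<forall>j\<le>k + n. z j \<in> ball zbar \<rho>" and "1 \<le> n"
  shows "(\<Sum>j<n. d (Suc k + j)) + d (k + n) \<le> d k + M * (phi_gap (Suc k) - phi_gap (Suc (k + n)))"
  using assms
proof (induction n)
  case (Suc n)
  have step: "2 * d (Suc (k + n)) \<le> d (k + n) + M * (phi_gap (Suc (k + n)) - phi_gap (Suc (Suc (k + n))))"
    by (rule KL_step) (use Suc.prems in auto)
  show ?case
  proof (cases "n = 0")
    case True
    then show ?thesis using step by simp
  next
    case False
    then have "(\<Sum>j<n. d (Suc k + j)) + d (k + n) \<le> d k + M * (phi_gap (Suc k) - phi_gap (Suc (k + n)))"
      using Suc by auto
    with step show ?thesis by (simp add: algebra_simps)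
  qed
qed simp

lemma d_sum_le:
  assumes "\<forall>j\<le>k + n. z j \<in> ball zbar \<rho>"
  shows "(\<Sum>j<n. d (Suc k + j)) \<le> d k + M * phi_gap k"
proof (cases "n = 0")
  case True
  then show ?thesis using M_nonneg phi_gap_nonneg[of k] by (simp add: d_def)
next
  case False
  then have "(\<Sum>j<n. d (Suc k + j)) + d (k + n) \<le> d k + M * (phi_gap (Suc k) - phi_gap (Suc (k + n)))"
    using d_sum_telescoping[OF assms] by simp
  moreover have "M * (phi_gap (Suc k) - phi_gap (Suc (k + n))) \<le> M * phi_gap k"
    using M_nonneg phi_gap_nonneg[of "Suc (k + n)"] phi_gap_decreasing[of k] by (intro mult_left_mono) auto
  ultimately show ?thesis by (smt (verit) norm_ge_zero d_def)
qed

lemma norm_z_sub_zbar_le: "norm (z n - zbar) \<le> norm (z 0 - zbar) + (\<Sum>i<n. d i)"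
proof (induction n)
  case (Suc n)
  have "norm (z (Suc n) - zbar) \<le> d n + norm (z n - zbar)"
    using norm_triangle_ineq[of "z (Suc n) - z n" "z n - zbar"] unfolding d_def by simp
  with Suc.IH show ?case by simp
qed simp

lemma z_in_ball: "z n \<in> ball zbar \<rho>"
proof -
  have init': "M * phi_gap 0 + 2 * sqrt (2 * rplus) * sqrt (l 0 - lbar) + norm (z 0 - zbar) < \<rho>"
    using init unfolding phi_gap_def l_def lbar_def .
  have "\<forall>j\<le>N. z j \<in> ball zbar \<rho>" for N
  proof (induction N)
    case 0
    have "0 \<le> M * phi_gap 0" using M_nonneg phi_gap_nonneg by simp
    moreover have "0 \<le> sqrt (2 * rplus) * sqrt (l 0 - lbar)" using lbar_less[of 0] rplus_pos by simp
    ultimately show ?case using init' by (simp add: dist_norm norm_minus_commute)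
  next
    case (Suc N)
    have "norm (z (Suc N) - zbar) \<le> norm (z 0 - zbar) + (\<Sum>i<Suc N. d i)"
      by (rule norm_z_sub_zbar_le)
    also have "(\<Sum>i<Suc N. d i) = d 0 + (\<Sum>j<N. d (Suc 0 + j))"
      unfolding sum.lessThan_Suc_shift by simp
    also have "\<dots> \<le> 2 * d 0 + M * phi_gap 0"
      using d_sum_le[of 0 N] Suc.IH by simp
    finally have "norm (z (Suc N) - zbar) < \<rho>"
      using d_le_sqrt_gap[of 0] init' by linarith
    then show ?case using Suc.IH le_Suc_eq by (auto simp: dist_norm norm_minus_commute)
  qed
  then show ?thesis by blast
qed

lemma tail_sum_le: "(\<Sum>j<n. d (j + k + 1)) \<le> d k + M * phi_gap k"
  using d_sum_le[of k n] z_in_ball by (simp add: add.commute)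

lemma tail_summable: "summable (\<lambda>j. d (j + k + 1))"
  by (rule summableI_nonneg_bounded[OF _ tail_sum_le]) (simp add: d_def)

lemma tail_suminf_le: "(\<Sum>j. d (j + k + 1)) \<le> M * phi_gap k + sqrt (2 * rplus) * sqrt (l k - lbar)"
  using suminf_le_const[OF tail_summable tail_sum_le[where k = k]] d_le_sqrt_gap[of k] by linarith

lemma d_summable: "summable d"
  using tail_summable[of 0] by (simp add: summable_Suc_iff)

lemma z_convergent: "convergent z"
proof -
  have "summable (\<lambda>i. z (Suc i) - z i)"
    using d_summable unfolding d_def by (rule summable_norm_cancel)
  then have "(\<lambda>n. z 0 + (\<Sum>i<n. z (Suc i) - z i)) \<longlonglongrightarrow> z 0 + (\<Sum>i. z (Suc i) - z i)"
    by (intro tendsto_add tendsto_const summable_LIMSEQ)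
  then have "z \<longlonglongrightarrow> z 0 + (\<Sum>i. z (Suc i) - z i)" by (simp add: sum_lessThan_telescope)
  then show ?thesis unfolding convergent_def by blast
qed

lemma W_tendsto_zero: "W \<longlonglongrightarrow> 0"
proof (rule Lim_null_comparison)
  show "eventually (\<lambda>k. norm (W k) \<le> W_factor * d k) sequentially"
    using W_norm_le_d z_in_ball by simp
  show "(\<lambda>k. W_factor * d k) \<longlonglongrightarrow> 0"
    using tendsto_mult_right_zero[OF summable_LIMSEQ_zero[OF d_summable]] .
qed

lemma limit_critical:
  assumes "z \<longlonglongrightarrow> zs"
  shows "0 \<in> limiting_subdiff L zs"
  unfolding limiting_subdiff_def
proof (intro CollectI exI conjI allI)
  show "(\<lambda>k. z (Suc k)) \<longlonglongrightarrow> zs" using assms by (rule LIMSEQ_Suc)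
  show "(\<lambda>k. L (z (Suc k))) \<longlonglongrightarrow> L zs" using assms by (rule L_tendsto)
  show "W k \<in> frechet_subdiff L (z (Suc k))" for k by (rule W_frechet_subdiff)
  show "W \<longlonglongrightarrow> 0" by (rule W_tendsto_zero)
qed

end

theorem mainTheorem13:
  fixes f :: "'r::{finite,linorder} \<Rightarrow> real^'n1 \<Rightarrow> ereal"
    and g :: "'r \<Rightarrow> real^'n2 \<Rightarrow> ereal"
    and Q :: "('n1,'n2,'r) pt \<Rightarrow> real"
    and gradQ :: "('n1,'n2,'r) pt \<Rightarrow> ('n1,'n2,'r) pt"
    and lam mu :: "nat \<Rightarrow> 'r \<Rightarrow> real"
    and rminus rplus :: real
    and z :: "nat \<Rightarrow> ('n1,'n2,'r) pt"
    and zbar :: "('n1,'n2,'r) pt"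
    and \<eta> :: ereal and U :: "('n1,'n2,'r) pt set" and \<phi> :: "real \<Rightarrow> real"
    and \<rho> C M :: real
  defines "L \<equiv> Lfun f Q g"
  (* (H) *)
  assumes f_proper: "\<And>r. proper_fun (f r)" and f_lsc: "\<And>r. lsc_fun (f r)"
    and g_proper: "\<And>r. proper_fun (g r)" and g_lsc: "\<And>r. lsc_fun (g r)"
    and Q_grad: "\<And>x. (Q has_derivative (\<lambda>h. inner (gradQ x) h)) (at x)"
    and gradQ_cont: "continuous_on UNIV gradQ"
    and gradQ_lip: "\<And>S. bounded S \<Longrightarrow> \<exists>K. K-lipschitz_on S gradQ"
  (* (H1) *)
    and L_bdd_below: "\<exists>m::real. \<forall>x. ereal m \<le> L x"
    and L_first_proper:
      "proper_fun (\<lambda>x. L (mix (fst (z 0)) (fst (z 0)) (Min UNIV) x, snd (z 0)))"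
    and r_pos: "0 < rminus" and r_lt: "rminus < rplus"
    and lam_bnd: "\<And>k r. rminus < lam k r \<and> lam k r < rplus"
    and mu_bnd: "\<And>k r. rminus < mu k r \<and> mu k r < rplus"
    and KL: "KL_at L zbar \<eta> U \<phi>"
    and rho_pos: "\<rho> > 0" and ball_U: "ball zbar \<rho> \<subseteq> U"
    and C_lip: "C-lipschitz_on (ball zbar (sqrt (2 * real CARD('r)) * \<rho>)) gradQ"
    and M_def: "M = 2 * rplus * (C * sqrt (2 * real CARD('r)) + 1 / rminus)"
    and PAM: "PAM_seq L lam mu z"
    and l_bounds: "\<And>k. L zbar < L (z k) \<and> L (z k) < L zbar + \<eta>"
    and init: "M * \<phi> (real_of_ereal (L (z 0)) - real_of_ereal (L zbar))
               + 2 * sqrt (2 * rplus) * sqrt (real_of_ereal (L (z 0)) - real_of_ereal (L zbar))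
               + norm (z 0 - zbar) < \<rho>"
  shows "(\<exists>zs. z \<longlonglongrightarrow> zs \<and> 0 \<in> limiting_subdiff L zs)
    \<and> (\<forall>k. z k \<in> ball zbar \<rho>)
    \<and> (\<forall>k. summable (\<lambda>j. norm (z (j + k + 2) - z (j + k + 1)))
         \<and> (\<Sum>j. norm (z (j + k + 2) - z (j + k + 1)))
             \<le> M * \<phi> (real_of_ereal (L (z k)) - real_of_ereal (L zbar))
               + sqrt (2 * rplus) * sqrt (real_of_ereal (L (z k)) - real_of_ereal (L zbar)))"
proof -
  have L_z_finite: "\<bar>L (z k)\<bar> \<noteq> \<infinity>" for k
  proof -
    obtain m where "ereal m \<le> L (z k)" using L_bdd_below by blast
    then show ?thesis using l_bounds[of k] by auto
  qed
  interpret pam_KL f g Q gradQ lam mu rminus rplus z L zbar \<eta> U \<phi> \<rho> C M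
    by unfold_locales (use assms L_z_finite in \<open>simp_all add: L_def\<close>)
  obtain zs where zs: "z \<longlonglongrightarrow> zs" using z_convergent unfolding convergent_def by blast
  have tail: "(\<lambda>j. norm (z (j + k + 2) - z (j + k + 1))) = (\<lambda>j. d (j + k + 1))" for k
    unfolding d_def by (simp add: numeral_2_eq_2)
  show ?thesis
    using zs limit_critical[OF zs] z_in_ball tail_summable tail_suminf_le
    unfolding tail phi_gap_def l_def lbar_def by blast
qed

end
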